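(* Let $H$ be a complex infinite-dimensional separable Hilbert space and let $(f_n)_{n=1}^\infty$ be a frame for $H$ with optimal upper frame bound $1$ and analysis operator $U$, such that $e=e((f_n)_{n=1}^\infty)<\infty$ and $\dim\operatorname{Im}(I-U^*U)<\infty$. Let $(x_n)_{n=1}^k$ be any finite sequence in $H$ such that $x_1,\dots,x_k,f_1,f_2,\dots$ is a Parseval frame for $H$. Then $$\sum_{n=1}^k\|x_n\|^2=\sum_{n=1}^\infty(1-\|f_n\|^2)-e.$$
   Context: The analysis operator is $U:H\to\ell^2$, $Ux=(\langle x,f_n\rangle)_n$. The optimal upper frame bound is the infimum of all $B$ with $\sum_n|\langle x,f_n\rangle|^2\le B\|x\|^2$ for all $x$. The excess $e((f_n))$ of a frame is the maximal number of elements that can be deleted so that the remaining sequence is still a frame for $H$. A Parseval frame is a sequence $(h_n)$ with $\sum_n|\langle x,h_n\rangle|^2=\|x\|^2$ for all $x$. *)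

theory Defs
  imports "HOL-Analysis.Analysis"
begin

text \<open>HOL-Analysis only provides real inner product spaces.\<close>

class complex_inner = real_normed_vector +
  fixes scaleC :: "complex \<Rightarrow> 'a \<Rightarrow> 'a" (infixr \<open>*\<^sub>C\<close> 75)
    and cinner :: "'a \<Rightarrow> 'a \<Rightarrow> complex"
  assumes scaleR_scaleC: "scaleR r x = scaleC (complex_of_real r) x"
    and scaleC_add_right: "a *\<^sub>C (x + y) = a *\<^sub>C x + a *\<^sub>C y"
    and scaleC_add_left: "(a + b) *\<^sub>C x = a *\<^sub>C x + b *\<^sub>C x"
    and scaleC_scaleC: "a *\<^sub>C (b *\<^sub>C x) = (a * b) *\<^sub>C x"
    and scaleC_one: "1 *\<^sub>C x = x"
    and cinner_conj: "cinner x y = cnj (cinner y x)"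
    and cinner_add_left: "cinner (x + y) z = cinner x z + cinner y z"
    and cinner_scaleC_left: "cinner (a *\<^sub>C x) y = a * cinner x y"
    and norm_cinner: "norm x = sqrt (Re (cinner x x))"

definition cspan :: "'a::complex_inner set \<Rightarrow> 'a set" where
  "cspan F = {(\<Sum>v\<in>G. c v *\<^sub>C v) | G c. finite G \<and> G \<subseteq> F}"

definition finite_dim_set :: "'a::complex_inner set \<Rightarrow> bool" where
  "finite_dim_set V \<longleftrightarrow> (\<exists>F. finite F \<and> V \<subseteq> cspan F)"

definition infinite_dimensional :: "'a::complex_inner itself \<Rightarrow> bool" where
  "infinite_dimensional _ \<longleftrightarrow> \<not> finite_dim_set (UNIV :: 'a set)"

definition separable_space :: "'a::complex_inner itself \<Rightarrow> bool" where
  "separable_space _ \<longleftrightarrow> (\<exists>D::'a set. countable D \<and> closure D = UNIV)"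

definition frame_on :: "(nat \<Rightarrow> 'a::complex_inner) \<Rightarrow> nat set \<Rightarrow> bool" where
  "frame_on f I \<longleftrightarrow>
     (\<forall>x. summable (\<lambda>n. if n \<in> I then (cmod (cinner x (f n)))\<^sup>2 else 0)) \<and>
     (\<exists>A B. 0 < A \<and> (\<forall>x.
        A * (norm x)\<^sup>2 \<le> (\<Sum>n. if n \<in> I then (cmod (cinner x (f n)))\<^sup>2 else 0) \<and>
        (\<Sum>n. if n \<in> I then (cmod (cinner x (f n)))\<^sup>2 else 0) \<le> B * (norm x)\<^sup>2))"

definition frame :: "(nat \<Rightarrow> 'a::complex_inner) \<Rightarrow> bool" where
  "frame f \<longleftrightarrow> frame_on f UNIV"

definition optimal_upper_frame_bound :: "(nat \<Rightarrow> 'a::complex_inner) \<Rightarrow> real" where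
  "optimal_upper_frame_bound f =
     Inf {B. \<forall>x. (\<Sum>n. (cmod (cinner x (f n)))\<^sup>2) \<le> B * (norm x)\<^sup>2}"

definition parseval_frame :: "(nat \<Rightarrow> 'a::complex_inner) \<Rightarrow> bool" where
  "parseval_frame h \<longleftrightarrow> (\<forall>x. (\<lambda>n. (cmod (cinner x (h n)))\<^sup>2) sums ((norm x)\<^sup>2))"

definition analysis_op :: "(nat \<Rightarrow> 'a::complex_inner) \<Rightarrow> 'a \<Rightarrow> (nat \<Rightarrow> complex)" where
  "analysis_op f x = (\<lambda>n. cinner x (f n))"

definition synthesis_op :: "(nat \<Rightarrow> 'a::complex_inner) \<Rightarrow> (nat \<Rightarrow> complex) \<Rightarrow> 'a" where
  "synthesis_op f c = (\<Sum>n. c n *\<^sub>C f n)"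

definition frame_op :: "(nat \<Rightarrow> 'a::complex_inner) \<Rightarrow> 'a \<Rightarrow> 'a" where
  "frame_op f x = synthesis_op f (analysis_op f x)"

definition ecard :: "nat set \<Rightarrow> enat" where
  "ecard J = (if finite J then enat (card J) else \<infinity>)"

definition excess :: "(nat \<Rightarrow> 'a::complex_inner) \<Rightarrow> enat" where
  "excess f = Sup {ecard J | J. frame_on f (UNIV - J)}"

definition prepend :: "nat \<Rightarrow> (nat \<Rightarrow> 'a) \<Rightarrow> (nat \<Rightarrow> 'a) \<Rightarrow> nat \<Rightarrow> 'a" where
  "prepend k x f n = (if n < k then x n else f (n - k))"

end

theory Submission
  imports Defs
begin

text \<open>Write \<open>g\<close> for the Parseval frame \<open>x\<^sub>1, \<dots>, x\<^sub>k, f\<^sub>1, f\<^sub>2, \<dots>\<close>. Its analysis operator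
  \<open>U\<close> is an isometry, so \<open>Q = I - U U\<^sup>*\<close> is an orthogonal projection on \<open>\<ell>\<^sup>2\<close>, with entries
  \<open>Q j n = \<delta>\<^sub>j\<^sub>n - \<langle>g j, g n\<rangle>\<close>. Removing a finite set \<open>J\<close> from \<open>g\<close> leaves a frame iff no
  nonzero vector is orthogonal to all remaining \<open>g n\<close> (the lower frame bound then follows by
  compactness), iff the rows \<open>Q j\<close>, \<open>j \<in> J\<close>, are linearly independent. A set removable
  from \<open>f\<close> corresponds to a set removable from \<open>g\<close> that contains the first \<open>k\<close> indices, so a
  largest removable set of \<open>f\<close>, of size \<open>e\<close>, yields \<open>e + k\<close> independent rows spanning the
  range of \<open>Q\<close>. Hence \<open>\<Sum>n. 1 - \<parallel>g n\<parallel>\<^sup>2\<close>, the trace of \<open>Q\<close>, equals its rank \<open>e + k\<close>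
  (computed with a Gram--Schmidt basis of the range); splitting off the first \<open>k\<close> terms gives
  the claim.\<close>

lemma cinner_zero_left [simp]: "cinner 0 y = 0"
  using cinner_add_left[of 0 0 y] by simp

lemma cinner_add_right: "cinner x (y + z) = cinner x y + cinner x z"
  by (metis cinner_conj cinner_add_left complex_cnj_add)

lemma cinner_scaleC_right: "cinner x (a *\<^sub>C y) = cnj a * cinner x y"
  by (metis cinner_conj cinner_scaleC_left complex_cnj_mult)

lemma cinner_scaleR_left: "cinner (r *\<^sub>R x) y = of_real r * cinner x y"
  unfolding scaleR_scaleC by (rule cinner_scaleC_left)

lemma cinner_sum_left: "cinner (\<Sum>i\<in>A. h i) y = (\<Sum>i\<in>A. cinner (h i) y)"
  by (induction A rule: infinite_finite_induct) (simp_all add: cinner_add_left)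

lemma cmod_cinner_commute: "cmod (cinner x y) = cmod (cinner y x)"
  by (metis cinner_conj complex_mod_cnj)

lemma cinner_self: "cinner x x = of_real ((norm x)\<^sup>2)"
proof -
  have real: "Im (cinner x x) = 0"
    using arg_cong[OF cinner_conj[of x x], of Im] by simp
  have "0 \<le> Re (cinner x x)"
  proof (rule ccontr)
    assume "\<not> 0 \<le> Re (cinner x x)"
    then show False using norm_cinner[of x] norm_ge_zero[of x] by simp
  qed
  then have "(norm x)\<^sup>2 = Re (cinner x x)" using norm_cinner[of x] by simp
  then show ?thesis using real by (simp add: complex_eq_iff)
qed

lemma norm_add_scaleC_square:
  "of_real ((norm (y + c *\<^sub>C z))\<^sup>2) =
    cinner y y + cnj c * cinner y z + c * cnj (cinner y z) + c * cnj c * cinner z z"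
proof -
  have "of_real ((norm (y + c *\<^sub>C z))\<^sup>2) = cinner (y + c *\<^sub>C z) (y + c *\<^sub>C z)"
    by (simp add: cinner_self)
  also have "\<dots> = cinner y y + cnj c * cinner y z + c * cinner z y + c * cnj c * cinner z z"
    by (simp add: cinner_add_left cinner_add_right cinner_scaleC_left cinner_scaleC_right
        algebra_simps)
  finally show ?thesis by (simp add: cinner_conj[of z y])
qed

lemma complex_polarization:
  fixes a b :: complex
  shows "a * cnj b = (of_real ((cmod (a + b))\<^sup>2) - of_real ((cmod (a + (-1) * b))\<^sup>2)
     + \<i> * of_real ((cmod (a + \<i> * b))\<^sup>2) - \<i> * of_real ((cmod (a + (-\<i>) * b))\<^sup>2)) / 4"
  unfolding cmod_power2 by (simp add: complex_eq_iff algebra_simps power2_eq_square)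

lemma cinner_polarization:
  "cinner y z = (of_real ((norm (y + 1 *\<^sub>C z))\<^sup>2) - of_real ((norm (y + (-1) *\<^sub>C z))\<^sup>2)
     + \<i> * of_real ((norm (y + \<i> *\<^sub>C z))\<^sup>2) - \<i> * of_real ((norm (y + (-\<i>) *\<^sub>C z))\<^sup>2)) / 4"
  unfolding norm_add_scaleC_square by (simp add: algebra_simps)

lemma finite_family_convergent_subseq:
  fixes b :: "nat \<Rightarrow> 'j \<Rightarrow> 'a::{real_normed_vector, heine_borel}"
  assumes "finite J" and "\<And>i j. j \<in> J \<Longrightarrow> norm (b i j) \<le> C"
  shows "\<exists>\<sigma> L. strict_mono \<sigma> \<and> (\<forall>j\<in>J. (\<lambda>i. b (\<sigma> i) j) \<longlonglongrightarrow> L j)"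
  using assms
proof (induction J rule: finite_induct)
  case empty
  show ?case by (rule exI[of _ id]) (auto simp: strict_mono_def)
next
  case (insert j J)
  then obtain \<sigma> L where \<sigma>: "strict_mono \<sigma>" and L: "\<forall>j\<in>J. (\<lambda>i. b (\<sigma> i) j) \<longlonglongrightarrow> L j"
    by blast
  have "bounded (range (\<lambda>i. b (\<sigma> i) j))"
    unfolding bounded_iff using insert.prems by auto
  then obtain l r where r: "strict_mono r" and l: "((\<lambda>i. b (\<sigma> i) j) \<circ> r) \<longlonglongrightarrow> l"
    using bounded_imp_convergent_subsequence by blast
  have "(\<lambda>i. b ((\<sigma> \<circ> r) i) j') \<longlonglongrightarrow> (L(j := l)) j'" if "j' \<in> insert j J" for j'
  proof (cases "j' = j")
    case False
    then have "((\<lambda>i. b (\<sigma> i) j') \<circ> r) \<longlonglongrightarrow> L j'"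
      using L r that by (intro LIMSEQ_subseq_LIMSEQ) auto
    then show ?thesis using False by (simp add: o_def)
  qed (use l in \<open>simp add: o_def\<close>)
  then show ?case using strict_mono_o[OF \<sigma> r] by blast
qed

lemma series_Cauchy_Schwarz:
  fixes a c :: "nat \<Rightarrow> real"
  assumes sa: "summable (\<lambda>n. (a n)\<^sup>2)" and sc: "summable (\<lambda>n. (c n)\<^sup>2)"
  shows "summable (\<lambda>n. \<bar>a n\<bar> * \<bar>c n\<bar>)"
    and "(\<Sum>n. \<bar>a n\<bar> * \<bar>c n\<bar>) \<le> sqrt (\<Sum>n. (a n)\<^sup>2) * sqrt (\<Sum>n. (c n)\<^sup>2)"
proof -
  show sm: "summable (\<lambda>n. \<bar>a n\<bar> * \<bar>c n\<bar>)"
  proof (rule summable_comparison_test)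
    show "summable (\<lambda>n. ((a n)\<^sup>2 + (c n)\<^sup>2) / 2)" using sa sc by (intro summable_divide summable_add)
    have "norm (\<bar>a n\<bar> * \<bar>c n\<bar>) \<le> ((a n)\<^sup>2 + (c n)\<^sup>2) / 2" for n
      using sum_squares_bound[of "\<bar>a n\<bar>" "\<bar>c n\<bar>"] by (simp add: abs_mult)
    then show "\<exists>N. \<forall>n\<ge>N. norm (\<bar>a n\<bar> * \<bar>c n\<bar>) \<le> ((a n)\<^sup>2 + (c n)\<^sup>2) / 2" by blast
  qed
  show "(\<Sum>n. \<bar>a n\<bar> * \<bar>c n\<bar>) \<le> sqrt (\<Sum>n. (a n)\<^sup>2) * sqrt (\<Sum>n. (c n)\<^sup>2)"
  proof (rule suminf_le_const[OF sm])
    fix N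
    have "(\<Sum>n<N. \<bar>a n\<bar> * \<bar>c n\<bar>) \<le> L2_set a {..<N} * L2_set c {..<N}"
      by (rule L2_set_mult_ineq)
    also have "\<dots> \<le> sqrt (\<Sum>n. (a n)\<^sup>2) * sqrt (\<Sum>n. (c n)\<^sup>2)"
      unfolding L2_set_def
      by (intro mult_mono real_sqrt_le_mono sum_le_suminf sa sc)
        (auto intro!: suminf_nonneg sa sum_nonneg)
    finally show "(\<Sum>n<N. \<bar>a n\<bar> * \<bar>c n\<bar>) \<le> sqrt (\<Sum>n. (a n)\<^sup>2) * sqrt (\<Sum>n. (c n)\<^sup>2)" .
  qed
qed

definition prepend_indices :: "nat \<Rightarrow> nat set \<Rightarrow> nat set" where
  "prepend_indices k J = (\<lambda>n. n + k) ` J \<union> {..<k}"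

lemma finite_prepend_indices: "finite J \<Longrightarrow> finite (prepend_indices k J)"
  by (simp add: prepend_indices_def)

lemma card_prepend_indices:
  assumes "finite J"
  shows "card (prepend_indices k J) = card J + k"
proof -
  have "card (prepend_indices k J) = card ((\<lambda>n. n + k) ` J) + card {..<k}"
    unfolding prepend_indices_def by (rule card_Un_disjoint) (use assms in auto)
  then show ?thesis by (simp add: card_image)
qed

lemma insert_prepend_indices:
  "insert (m + k) (prepend_indices k J) = prepend_indices k (insert m J)"
  by (simp add: prepend_indices_def)

lemma not_in_prepend_indices:
  assumes "l \<notin> prepend_indices k J"
  shows "l = (l - k) + k" "l - k \<notin> J"
  using assms unfolding prepend_indices_def by (auto simp: image_iff)

lemma frame_on_prepend_iff:
  "frame_on f (UNIV - J) \<longleftrightarrow> frame_on (prepend k x f) (UNIV - prepend_indices k J)"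
proof -
  define H where "H y n = (if n \<in> UNIV - prepend_indices k J
    then (cmod (cinner y (prepend k x f n)))\<^sup>2 else 0)" for y n
  define F where "F y n = (if n \<in> UNIV - J then (cmod (cinner y (f n)))\<^sup>2 else 0)" for y n
  have "(\<lambda>m. H y (m + k)) = F y" "(\<Sum>i<k. H y i) = 0" for y
    by (auto simp: H_def F_def prepend_indices_def prepend_def fun_eq_iff)
  then have sums_eq: "H y sums s \<longleftrightarrow> F y sums s" for y s
    using sums_iff_shift[of "H y" k s] by simp
  have "summable (H y) \<longleftrightarrow> summable (F y)" "suminf (H y) = suminf (F y)" for y
    unfolding summable_def suminf_def sums_eq by simp_all
  then show ?thesis unfolding frame_on_def H_def[symmetric] F_def[symmetric] by simp
qed

lemma card_le_excess:
  assumes "finite J" "frame_on f (UNIV - J)"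
  shows "enat (card J) \<le> excess f"
  unfolding excess_def using assms by (intro Sup_upper) (auto simp: ecard_def)

lemma excess_attained:
  assumes "frame f" "excess f = enat e"
  shows "\<exists>J. finite J \<and> frame_on f (UNIV - J) \<and> card J = e"
proof -
  define S where "S = {ecard J | J. frame_on f (UNIV - J)}"
  have "ecard {} \<in> S" using assms(1) by (auto simp: S_def frame_def)
  moreover have "Sup S \<noteq> \<infinity>" using assms(2) by (simp add: S_def excess_def)
  ultimately have "Sup S \<in> S"
    unfolding Sup_enat_def by (auto split: if_splits intro: Max_in)
  then obtain J where "frame_on f (UNIV - J)" "ecard J = enat e"
    using assms(2) by (auto simp: S_def excess_def)
  then show ?thesis by (auto simp: ecard_def split: if_splits)
qed

definition in_family_span :: "nat \<Rightarrow> (nat \<Rightarrow> nat \<Rightarrow> complex) \<Rightarrow> (nat \<Rightarrow> complex) \<Rightarrow> bool" where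
  "in_family_span r u v \<longleftrightarrow> (\<exists>\<beta>. v = (\<lambda>n. \<Sum>i<r. \<beta> i * u i n))"

lemma in_family_span_fun_upd:
  "in_family_span (Suc r) (u(r := w)) (\<lambda>n. (\<Sum>i<r. \<beta> i * u i n) + \<gamma> * w n)"
  unfolding in_family_span_def
  by (rule exI[of _ "\<beta>(r := \<gamma>)"]) (auto intro!: sum.cong)

locale parseval =
  fixes g :: "nat \<Rightarrow> 'a::complex_inner"
  assumes parseval: "parseval_frame g"
begin

lemma sums_cmod_cinner_sq: "(\<lambda>n. (cmod (cinner y (g n)))\<^sup>2) sums (norm y)\<^sup>2"
  using parseval unfolding parseval_frame_def by blast

lemma summable_cmod_cinner_sq: "summable (\<lambda>n. (cmod (cinner y (g n)))\<^sup>2)"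
  using sums_cmod_cinner_sq by (rule sums_summable)

lemma cmod_cinner_le_norm: "cmod (cinner y (g n)) \<le> norm y"
proof -
  have "(\<Sum>i\<in>{n}. (cmod (cinner y (g i)))\<^sup>2) \<le> (\<Sum>i. (cmod (cinner y (g i)))\<^sup>2)"
    by (rule sum_le_suminf[OF summable_cmod_cinner_sq]) auto
  then show ?thesis
    using sums_unique[OF sums_cmod_cinner_sq[of y]] by (simp add: power2_le_imp_le)
qed

lemma sums_cinner_expansion: "(\<lambda>n. cinner y (g n) * cinner (g n) z) sums cinner y z"
proof -
  define a where "a n = cinner y (g n)" for n
  define b where "b n = cinner z (g n)" for n
  have "cinner (y + c *\<^sub>C z) (g n) = a n + c * b n" for c n
    by (simp add: a_def b_def cinner_add_left cinner_scaleC_left)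
  then have S: "(\<lambda>n. complex_of_real ((cmod (a n + c * b n))\<^sup>2))
      sums complex_of_real ((norm (y + c *\<^sub>C z))\<^sup>2)" for c
    using sums_of_real[OF sums_cmod_cinner_sq[of "y + c *\<^sub>C z"]] by simp
  have prod: "cinner y (g n) * cinner (g n) z = a n * cnj (b n)" for n
    unfolding a_def b_def by (simp add: cinner_conj[of "g n" z])
  show ?thesis
    unfolding prod complex_polarization cinner_polarization[of y z]
    using S[of 1] S[of "-1"] S[of "\<i>"] S[of "-\<i>"]
    by (intro sums_divide sums_diff sums_add sums_mult) simp_all
qed

lemma summable_norm_cinner_expansion:
  "summable (\<lambda>n. norm (cinner y (g n) * cinner (g n) z))"
proof (rule summable_comparison_test)
  show "summable (\<lambda>n. ((cmod (cinner y (g n)))\<^sup>2 + (cmod (cinner z (g n)))\<^sup>2) / 2)"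
    by (intro summable_divide summable_add summable_cmod_cinner_sq)
  have "norm (norm (cinner y (g n) * cinner (g n) z))
      \<le> ((cmod (cinner y (g n)))\<^sup>2 + (cmod (cinner z (g n)))\<^sup>2) / 2" for n
    using sum_squares_bound[of "cmod (cinner y (g n))" "cmod (cinner z (g n))"]
    by (simp add: norm_mult cmod_cinner_commute[of "g n" z])
  then show "\<exists>N. \<forall>n\<ge>N. norm (norm (cinner y (g n) * cinner (g n) z))
      \<le> ((cmod (cinner y (g n)))\<^sup>2 + (cmod (cinner z (g n)))\<^sup>2) / 2" by blast
qed

definition energy_outside :: "nat set \<Rightarrow> 'a \<Rightarrow> real" where
  "energy_outside J y = (\<Sum>n. if n \<notin> J then (cmod (cinner y (g n)))\<^sup>2 else 0)"

lemma summable_energy_outside: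
  "summable (\<lambda>n. if n \<notin> J then (cmod (cinner y (g n)))\<^sup>2 else 0)"
  by (rule summable_comparison_test[OF _ summable_cmod_cinner_sq[of y]]) auto

lemma energy_outside_nonneg: "0 \<le> energy_outside J y"
  unfolding energy_outside_def by (rule suminf_nonneg[OF summable_energy_outside]) auto

lemma energy_outside_le_norm: "energy_outside J y \<le> (norm y)\<^sup>2"
  unfolding energy_outside_def sums_unique[OF sums_cmod_cinner_sq[of y]]
  by (rule suminf_le[OF _ summable_energy_outside summable_cmod_cinner_sq]) auto

lemma cmod_cinner_sq_le_energy_outside:
  assumes "n \<notin> J"
  shows "(cmod (cinner y (g n)))\<^sup>2 \<le> energy_outside J y"
proof -
  have "(\<Sum>i\<in>{n}. if i \<notin> J then (cmod (cinner y (g i)))\<^sup>2 else 0) \<le> energy_outside J y"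
    unfolding energy_outside_def by (rule sum_le_suminf[OF summable_energy_outside]) auto
  then show ?thesis using assms by simp
qed

lemma energy_outside_scaleR: "energy_outside J (r *\<^sub>R y) = r\<^sup>2 * energy_outside J y"
proof -
  have "(\<lambda>n. if n \<notin> J then (cmod (cinner (r *\<^sub>R y) (g n)))\<^sup>2 else 0)
      = (\<lambda>n. r\<^sup>2 * (if n \<notin> J then (cmod (cinner y (g n)))\<^sup>2 else 0))"
    by (auto simp: cinner_scaleR_left norm_mult power_mult_distrib)
  then show ?thesis
    unfolding energy_outside_def using suminf_mult[OF summable_energy_outside] by simp
qed

lemma sum_cmod_cinner_sq_add_energy_outside:
  assumes "finite J"
  shows "(\<Sum>j\<in>J. (cmod (cinner y (g j)))\<^sup>2) + energy_outside J y = (norm y)\<^sup>2"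
proof -
  have "(\<lambda>m. (if m \<in> J then (cmod (cinner y (g m)))\<^sup>2 else 0)
      + (if m \<notin> J then (cmod (cinner y (g m)))\<^sup>2 else 0))
    sums ((\<Sum>j\<in>J. (cmod (cinner y (g j)))\<^sup>2) + energy_outside J y)"
    unfolding energy_outside_def
    by (intro sums_add sums_If_finite_set assms summable_sums[OF summable_energy_outside])
  moreover have "(\<lambda>m. (if m \<in> J then (cmod (cinner y (g m)))\<^sup>2 else 0)
      + (if m \<notin> J then (cmod (cinner y (g m)))\<^sup>2 else 0)) = (\<lambda>m. (cmod (cinner y (g m)))\<^sup>2)"
    by auto
  ultimately have "(\<lambda>m. (cmod (cinner y (g m)))\<^sup>2)
      sums ((\<Sum>j\<in>J. (cmod (cinner y (g j)))\<^sup>2) + energy_outside J y)"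
    by simp
  with sums_cmod_cinner_sq[of y] show ?thesis using sums_unique2 by blast
qed

lemma cmod_expansion_outside_le:
  "cmod (\<Sum>m. if m \<notin> J then cinner y (g m) * cinner (g m) z else 0)
    \<le> sqrt (energy_outside J y) * norm z"
proof -
  define a where "a m = (if m \<notin> J then cmod (cinner y (g m)) else 0)" for m
  define c where "c m = cmod (cinner z (g m))" for m
  have aeq: "(\<lambda>m. (a m)\<^sup>2) = (\<lambda>m. if m \<notin> J then (cmod (cinner y (g m)))\<^sup>2 else 0)"
    by (auto simp: a_def)
  have sa: "summable (\<lambda>m. (a m)\<^sup>2)" unfolding aeq by (rule summable_energy_outside)
  have sc: "summable (\<lambda>m. (c m)\<^sup>2)" using summable_cmod_cinner_sq[of z] by (simp add: c_def)
  have nm: "norm (if m \<notin> J then cinner y (g m) * cinner (g m) z else 0) = \<bar>a m\<bar> * \<bar>c m\<bar>" for m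
    by (simp add: a_def c_def norm_mult cmod_cinner_commute[of "g m" z])
  have "summable (\<lambda>m. norm (if m \<notin> J then cinner y (g m) * cinner (g m) z else 0))"
    unfolding nm by (rule series_Cauchy_Schwarz(1)[OF sa sc])
  then have "cmod (\<Sum>m. if m \<notin> J then cinner y (g m) * cinner (g m) z else 0)
      \<le> (\<Sum>m. norm (if m \<notin> J then cinner y (g m) * cinner (g m) z else 0))"
    by (rule summable_norm)
  also have "\<dots> \<le> sqrt (\<Sum>n. (a n)\<^sup>2) * sqrt (\<Sum>n. (c n)\<^sup>2)"
    unfolding nm by (rule series_Cauchy_Schwarz(2)[OF sa sc])
  also have "(\<Sum>n. (a n)\<^sup>2) = energy_outside J y" unfolding energy_outside_def aeq ..
  also have "(\<Sum>n. (c n)\<^sup>2) = (norm z)\<^sup>2"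
    unfolding c_def using sums_unique[OF sums_cmod_cinner_sq[of z]] by simp
  finally show ?thesis by simp
qed

lemma cinner_expansion_split:
  assumes "finite J"
  shows "cinner y z = (\<Sum>j\<in>J. cinner y (g j) * cinner (g j) z)
     + (\<Sum>m. if m \<notin> J then cinner y (g m) * cinner (g m) z else 0)"
proof -
  have "summable (\<lambda>m. if m \<notin> J then cinner y (g m) * cinner (g m) z else 0)"
    by (rule summable_comparison_test[OF _ summable_norm_cinner_expansion[of y z]]) auto
  then have "(\<lambda>m. (if m \<in> J then cinner y (g m) * cinner (g m) z else 0)
      + (if m \<notin> J then cinner y (g m) * cinner (g m) z else 0))
    sums ((\<Sum>j\<in>J. cinner y (g j) * cinner (g j) z)
      + (\<Sum>m. if m \<notin> J then cinner y (g m) * cinner (g m) z else 0))"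
    by (intro sums_add sums_If_finite_set assms summable_sums)
  moreover have "(\<lambda>m. (if m \<in> J then cinner y (g m) * cinner (g m) z else 0)
      + (if m \<notin> J then cinner y (g m) * cinner (g m) z else 0))
    = (\<lambda>m. cinner y (g m) * cinner (g m) z)"
    by auto
  ultimately have "(\<lambda>m. cinner y (g m) * cinner (g m) z) sums ((\<Sum>j\<in>J. cinner y (g j) * cinner (g j) z)
      + (\<Sum>m. if m \<notin> J then cinner y (g m) * cinner (g m) z else 0))"
    by simp
  with sums_cinner_expansion[of y z] show ?thesis using sums_unique2 by blast
qed

definition deficient :: "nat set \<Rightarrow> bool" where
  "deficient J \<longleftrightarrow> (\<exists>y. y \<noteq> 0 \<and> (\<forall>n. n \<notin> J \<longrightarrow> cinner y (g n) = 0))"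

lemma tendsto_cinner_if_energy_outside_tendsto_0:
  assumes fin: "finite J"
    and T0: "(\<lambda>i. energy_outside J (v i)) \<longlonglongrightarrow> 0"
    and L: "\<And>j. j \<in> J \<Longrightarrow> (\<lambda>i. cinner (v i) (g j)) \<longlonglongrightarrow> L j"
  shows "(\<lambda>i. cinner (v i) (g n)) \<longlonglongrightarrow> cinner (\<Sum>j\<in>J. L j *\<^sub>C g j) (g n)"
proof -
  define R where
    "R i = (\<Sum>m. if m \<notin> J then cinner (v i) (g m) * cinner (g m) (g n) else 0)" for i
  have "(\<lambda>i. sqrt (energy_outside J (v i))) \<longlonglongrightarrow> 0"
    using tendsto_real_sqrt[OF T0] by simp
  then have "(\<lambda>i. sqrt (energy_outside J (v i)) * norm (g n)) \<longlonglongrightarrow> 0"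
    by (rule tendsto_mult_left_zero)
  then have R0: "R \<longlonglongrightarrow> 0"
    by (rule Lim_null_comparison[rotated]) (simp add: R_def cmod_expansion_outside_le)
  have "(\<lambda>i. (\<Sum>j\<in>J. cinner (v i) (g j) * cinner (g j) (g n)) + R i)
      \<longlonglongrightarrow> (\<Sum>j\<in>J. L j * cinner (g j) (g n)) + 0"
    by (intro tendsto_add tendsto_sum tendsto_mult_right L R0)
  then show ?thesis
    unfolding R_def cinner_expansion_split[OF fin, symmetric]
    by (simp add: cinner_sum_left cinner_scaleC_left)
qed

lemma deficient_if_energy_outside_tendsto_0:
  assumes fin: "finite J" and unit: "\<And>i. norm (v i) = 1"
    and T0: "(\<lambda>i. energy_outside J (v i)) \<longlonglongrightarrow> 0"
  shows "deficient J"
proof -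
  have "cmod (cinner (v i) (g j)) \<le> 1" for i j
    using cmod_cinner_le_norm[of "v i" j] unit[of i] by simp
  then obtain \<sigma> L where \<sigma>: "strict_mono \<sigma>"
    and L: "\<And>j. j \<in> J \<Longrightarrow> (\<lambda>i. cinner (v (\<sigma> i)) (g j)) \<longlonglongrightarrow> L j"
    using finite_family_convergent_subseq[OF fin, of "\<lambda>i j. cinner (v i) (g j)" 1] by blast
  have T0': "(\<lambda>i. energy_outside J (v (\<sigma> i))) \<longlonglongrightarrow> 0"
    using LIMSEQ_subseq_LIMSEQ[OF T0 \<sigma>] by (simp add: o_def)
  define y where "y = (\<Sum>j\<in>J. L j *\<^sub>C g j)"
  have lim: "(\<lambda>i. cinner (v (\<sigma> i)) (g n)) \<longlonglongrightarrow> cinner y (g n)" for n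
    unfolding y_def by (rule tendsto_cinner_if_energy_outside_tendsto_0[OF fin T0' L])
  have outside: "cinner y (g n) = 0" if "n \<notin> J" for n
  proof -
    have "(\<lambda>i. cinner (v (\<sigma> i)) (g n)) \<longlonglongrightarrow> 0"
    proof (rule Lim_null_comparison)
      show "\<forall>\<^sub>F i in sequentially.
          norm (cinner (v (\<sigma> i)) (g n)) \<le> sqrt (energy_outside J (v (\<sigma> i)))"
        by (intro always_eventually allI real_le_rsqrt cmod_cinner_sq_le_energy_outside that)
      show "(\<lambda>i. sqrt (energy_outside J (v (\<sigma> i)))) \<longlonglongrightarrow> 0"
        using tendsto_real_sqrt[OF T0'] by simp
    qed
    then show ?thesis using LIMSEQ_unique[OF lim] by blast
  qed
  have "(\<lambda>i. \<Sum>j\<in>J. (cmod (cinner (v (\<sigma> i)) (g j)))\<^sup>2) \<longlonglongrightarrow> (\<Sum>j\<in>J. (cmod (L j))\<^sup>2)"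
    by (intro tendsto_sum tendsto_power tendsto_norm L)
  moreover have "(\<lambda>i. \<Sum>j\<in>J. (cmod (cinner (v (\<sigma> i)) (g j)))\<^sup>2) \<longlonglongrightarrow> 1 - 0"
  proof -
    have "(\<Sum>j\<in>J. (cmod (cinner (v (\<sigma> i)) (g j)))\<^sup>2) = 1 - energy_outside J (v (\<sigma> i))" for i
      using sum_cmod_cinner_sq_add_energy_outside[OF fin, of "v (\<sigma> i)"] unit[of "\<sigma> i"] by simp
    then show ?thesis using tendsto_diff[OF tendsto_const T0'] by simp
  qed
  ultimately have "(\<Sum>j\<in>J. (cmod (L j))\<^sup>2) = 1" using LIMSEQ_unique by fastforce
  moreover have "L j = cinner y (g j)" if "j \<in> J" for j
    using LIMSEQ_unique[OF L[OF that] lim] .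
  ultimately have "y \<noteq> 0" by (metis (no_types, lifting) cinner_zero_left norm_zero sum.neutral
        zero_neq_one zero_power2)
  then show ?thesis unfolding deficient_def using outside by blast
qed

lemma energy_outside_lower_bound:
  assumes fin: "finite J" and "\<not> deficient J"
  shows "\<exists>A>0. \<forall>y. A * (norm y)\<^sup>2 \<le> energy_outside J y"
proof (rule ccontr)
  assume "\<not> ?thesis"
  then have "\<forall>i. \<exists>y. energy_outside J y < 1 / real (Suc i) * (norm y)\<^sup>2"
    by (metis not_le of_nat_0_less_iff zero_less_Suc zero_less_divide_1_iff)
  then obtain y where y: "\<And>i. energy_outside J (y i) < 1 / real (Suc i) * (norm (y i))\<^sup>2"
    by metis
  have y0: "y i \<noteq> 0" for i
    using y[of i] energy_outside_nonneg[of J "y i"] by auto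
  define v where "v i = (1 / norm (y i)) *\<^sub>R y i" for i
  have unit: "norm (v i) = 1" for i using y0[of i] by (simp add: v_def)
  have "energy_outside J (v i) \<le> 1 / real (Suc i)" for i
  proof -
    have "energy_outside J (v i) = (1 / norm (y i))\<^sup>2 * energy_outside J (y i)"
      unfolding v_def by (rule energy_outside_scaleR)
    also have "\<dots> \<le> (1 / norm (y i))\<^sup>2 * (1 / real (Suc i) * (norm (y i))\<^sup>2)"
      using y[of i] by (intro mult_left_mono) auto
    also have "\<dots> = 1 / real (Suc i)" using y0[of i] by (simp add: field_simps)
    finally show ?thesis .
  qed
  then have "(\<lambda>i. energy_outside J (v i)) \<longlonglongrightarrow> 0"
    using energy_outside_nonneg
    by (intro tendsto_sandwich[OF _ _ tendsto_const LIMSEQ_Suc[OF lim_const_over_n[of 1]]])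
      (auto intro: always_eventually)
  then have "deficient J" by (rule deficient_if_energy_outside_tendsto_0[OF fin unit])
  with assms(2) show False by blast
qed

lemma frame_on_iff_not_deficient:
  assumes "finite J"
  shows "frame_on g (UNIV - J) \<longleftrightarrow> \<not> deficient J"
proof -
  have sum_eq: "(\<Sum>n. if n \<in> UNIV - J then (cmod (cinner y (g n)))\<^sup>2 else 0) = energy_outside J y"
    for y unfolding energy_outside_def by simp
  show ?thesis
  proof
    assume "frame_on g (UNIV - J)"
    then obtain A where A: "0 < A" "\<And>y. A * (norm y)\<^sup>2 \<le> energy_outside J y"
      unfolding frame_on_def sum_eq by blast
    show "\<not> deficient J"
    proof
      assume "deficient J"
      then obtain y where "y \<noteq> 0" "\<And>n. n \<notin> J \<Longrightarrow> cinner y (g n) = 0"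
        unfolding deficient_def by blast
      then have "energy_outside J y = 0" "0 < A * (norm y)\<^sup>2"
        using A(1) by (simp_all add: energy_outside_def if_distrib cong: if_cong)
      then show False using A(2)[of y] by linarith
    qed
  next
    assume "\<not> deficient J"
    then obtain A where "0 < A" "\<And>y. A * (norm y)\<^sup>2 \<le> energy_outside J y"
      using energy_outside_lower_bound[OF assms] by blast
    then show "frame_on g (UNIV - J)"
      unfolding frame_on_def sum_eq using summable_energy_outside energy_outside_le_norm
      by (intro conjI allI exI[of _ A] exI[of _ 1]) auto
  qed
qed

text \<open>\<open>Q j\<close> is the \<open>j\<close>-th row of the matrix of \<open>I - U U\<^sup>*\<close>. The series \<open>seq_inner\<close> is the
  inner product of \<open>\<ell>\<^sup>2\<close>; it is only ever applied to sequences in the span of these rows, where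
  it converges.\<close>

definition Q :: "nat \<Rightarrow> nat \<Rightarrow> complex" where
  "Q j n = (if j = n then 1 else 0) - cinner (g j) (g n)"

definition Q_comb :: "nat set \<Rightarrow> (nat \<Rightarrow> complex) \<Rightarrow> nat \<Rightarrow> complex" where
  "Q_comb K c = (\<lambda>n. \<Sum>j\<in>K. c j * Q j n)"

definition in_Q_span :: "nat set \<Rightarrow> (nat \<Rightarrow> complex) \<Rightarrow> bool" where
  "in_Q_span K u \<longleftrightarrow> (\<exists>c. u = Q_comb K c)"

definition Q_independent :: "nat set \<Rightarrow> bool" where
  "Q_independent K \<longleftrightarrow> (\<forall>c. Q_comb K c = (\<lambda>n. 0) \<longrightarrow> (\<forall>j\<in>K. c j = 0))"

definition seq_inner :: "(nat \<Rightarrow> complex) \<Rightarrow> (nat \<Rightarrow> complex) \<Rightarrow> complex" where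
  "seq_inner v w = (\<Sum>n. v n * cnj (w n))"

definition orthonormal_family :: "nat set \<Rightarrow> nat \<Rightarrow> (nat \<Rightarrow> nat \<Rightarrow> complex) \<Rightarrow> bool" where
  "orthonormal_family K r u \<longleftrightarrow> (\<forall>i<r. in_Q_span K (u i)) \<and>
     (\<forall>i<r. \<forall>i'<r. seq_inner (u i) (u i') = (if i = i' then 1 else 0))"

lemma Q_diag: "Q l l = of_real (1 - (norm (g l))\<^sup>2)"
  by (simp add: Q_def cinner_self)

lemma cnj_Q: "cnj (Q j n) = Q n j"
  unfolding Q_def by (simp add: cinner_conj[of "g n" "g j"])

lemma sums_Q_mult_Q: "(\<lambda>m. Q j m * Q m n) sums Q j n"
proof -
  let ?\<delta> = "if j = n then 1 else 0"
  have "Q j m * Q m n = (if m = j then ?\<delta> - cinner (g j) (g n) else 0)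
     - (if m = n then cinner (g j) (g n) else 0) + cinner (g j) (g m) * cinner (g m) (g n)" for m
    unfolding Q_def by (auto simp: algebra_simps)
  moreover have "(\<lambda>m. (if m = j then ?\<delta> - cinner (g j) (g n) else 0)
     - (if m = n then cinner (g j) (g n) else 0) + cinner (g j) (g m) * cinner (g m) (g n))
     sums ((?\<delta> - cinner (g j) (g n)) - cinner (g j) (g n) + cinner (g j) (g n))"
    by (intro sums_add sums_diff sums_cinner_expansion
        sums_single[of j "\<lambda>_. ?\<delta> - cinner (g j) (g n)", simplified]
        sums_single[of n "\<lambda>_. cinner (g j) (g n)", simplified])
  ultimately show ?thesis by (simp add: Q_def)
qed

lemma sums_Q_span_reproducing:
  assumes "finite K" "in_Q_span K u"
  shows "(\<lambda>n. u n * cnj (Q l n)) sums u l"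
proof -
  obtain c where u: "u = Q_comb K c" using assms(2) unfolding in_Q_span_def by blast
  have "(\<lambda>n. \<Sum>j\<in>K. c j * (Q j n * Q n l)) sums (\<Sum>j\<in>K. c j * Q j l)"
    by (intro sums_sum sums_mult sums_Q_mult_Q)
  then show ?thesis unfolding u Q_comb_def cnj_Q by (simp add: sum_distrib_right mult.assoc)
qed

lemma sums_seq_inner_Q_comb:
  assumes "finite K'" "in_Q_span K' v" "finite K"
  shows "(\<lambda>n. v n * cnj (Q_comb K d n)) sums (\<Sum>k\<in>K. cnj (d k) * v k)"
proof -
  have "(\<lambda>n. \<Sum>k\<in>K. cnj (d k) * (v n * cnj (Q k n))) sums (\<Sum>k\<in>K. cnj (d k) * v k)"
    by (intro sums_sum sums_mult sums_Q_span_reproducing[OF assms(1,2)])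
  then show ?thesis unfolding Q_comb_def by (simp add: sum_distrib_left algebra_simps)
qed

lemma seq_inner_Q_comb:
  assumes "finite K'" "in_Q_span K' v" "finite K"
  shows "seq_inner v (Q_comb K d) = (\<Sum>k\<in>K. cnj (d k) * v k)"
  unfolding seq_inner_def using sums_seq_inner_Q_comb[OF assms] by (rule sums_unique[symmetric])

lemma seq_inner_Q_right:
  assumes "finite K" "in_Q_span K v"
  shows "seq_inner v (Q l) = v l"
  unfolding seq_inner_def using sums_Q_span_reproducing[OF assms] by (rule sums_unique[symmetric])

lemma sums_seq_inner:
  assumes "finite K" "in_Q_span K v" "in_Q_span K w"
  shows "(\<lambda>n. v n * cnj (w n)) sums seq_inner v w"
proof -
  obtain d where "w = Q_comb K d" using assms(3) unfolding in_Q_span_def by blast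
  then show ?thesis
    unfolding seq_inner_def using sums_seq_inner_Q_comb[OF assms(1,2,1)]
    by (metis sums_summable summable_sums)
qed

lemma seq_inner_commute:
  assumes "finite K" "in_Q_span K v" "in_Q_span K w"
  shows "seq_inner w v = cnj (seq_inner v w)"
proof -
  have "(\<lambda>n. cnj (v n * cnj (w n))) sums cnj (seq_inner v w)"
    using sums_seq_inner[OF assms] by (simp only: sums_cnj)
  then show ?thesis unfolding seq_inner_def by (simp add: mult.commute sums_unique[symmetric])
qed

lemma sums_seq_inner_self:
  assumes "finite K" "in_Q_span K w"
  shows "(\<lambda>n. complex_of_real ((cmod (w n))\<^sup>2)) sums seq_inner w w"
  unfolding complex_norm_square by (rule sums_seq_inner[OF assms assms(2)])

lemma in_Q_span_Q:
  assumes "j \<in> K" "finite K"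
  shows "in_Q_span K (Q j)"
proof -
  have "(\<Sum>i\<in>K. (if i = j then 1 else 0) * Q i n) = Q j n" for n
  proof -
    have "(\<Sum>i\<in>K. (if i = j then 1 else 0) * Q i n) = (\<Sum>i\<in>K. if i = j then Q i n else 0)"
      by (rule sum.cong) auto
    then show ?thesis using assms by simp
  qed
  then have "Q_comb K (\<lambda>i. if i = j then 1 else 0) = Q j"
    by (simp add: Q_comb_def fun_eq_iff)
  then show ?thesis unfolding in_Q_span_def by metis
qed

lemma Q_comb_extend:
  assumes "K \<subseteq> K'" "finite K'"
  shows "Q_comb K' (\<lambda>j. if j \<in> K then c j else 0) = Q_comb K c"
  unfolding Q_comb_def using assms
  by (auto intro!: ext sum.mono_neutral_cong_right simp: if_distrib)

lemma in_Q_span_mono: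
  assumes "K \<subseteq> K'" "finite K'" "in_Q_span K u"
  shows "in_Q_span K' u"
  using assms Q_comb_extend unfolding in_Q_span_def by metis

lemma in_Q_span_sum:
  assumes "finite I" "\<And>i. i \<in> I \<Longrightarrow> in_Q_span K (u i)"
  shows "in_Q_span K (\<lambda>n. \<Sum>i\<in>I. a i * u i n)"
proof -
  obtain C where C: "\<And>i. i \<in> I \<Longrightarrow> u i = Q_comb K (C i)"
    using assms(2) unfolding in_Q_span_def by metis
  have "(\<Sum>i\<in>I. a i * u i n) = Q_comb K (\<lambda>j. \<Sum>i\<in>I. a i * C i j) n" for n
  proof -
    have "(\<Sum>i\<in>I. a i * u i n) = (\<Sum>i\<in>I. \<Sum>j\<in>K. a i * (C i j * Q j n))"
      using C by (auto simp: Q_comb_def sum_distrib_left intro!: sum.cong)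
    also have "\<dots> = (\<Sum>j\<in>K. \<Sum>i\<in>I. a i * (C i j * Q j n))" by (rule sum.swap)
    finally show ?thesis by (simp add: Q_comb_def sum_distrib_right mult.assoc)
  qed
  then show ?thesis unfolding in_Q_span_def by blast
qed

lemma in_Q_span_diff:
  assumes "in_Q_span K u" "in_Q_span K v"
  shows "in_Q_span K (\<lambda>n. u n - v n)"
proof -
  obtain c d where "u = Q_comb K c" "v = Q_comb K d" using assms unfolding in_Q_span_def by blast
  then have "(\<lambda>n. u n - v n) = Q_comb K (\<lambda>j. c j - d j)"
    by (simp add: Q_comb_def fun_eq_iff sum_subtractf algebra_simps)
  then show ?thesis unfolding in_Q_span_def by blast
qed

lemma in_Q_span_mult:
  assumes "in_Q_span K u"
  shows "in_Q_span K (\<lambda>n. a * u n)"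
proof -
  obtain c where "u = Q_comb K c" using assms unfolding in_Q_span_def by blast
  then have "(\<lambda>n. a * u n) = Q_comb K (\<lambda>j. a * c j)"
    by (simp add: Q_comb_def fun_eq_iff sum_distrib_left mult.assoc)
  then show ?thesis unfolding in_Q_span_def by blast
qed

lemma seq_inner_sum_left:
  assumes "finite K" "in_Q_span K z" "finite I" "\<And>i. i \<in> I \<Longrightarrow> in_Q_span K (v i)"
  shows "seq_inner (\<lambda>n. \<Sum>i\<in>I. a i * v i n) z = (\<Sum>i\<in>I. a i * seq_inner (v i) z)"
proof -
  obtain d where z: "z = Q_comb K d" using assms(2) unfolding in_Q_span_def by blast
  have "seq_inner (\<lambda>n. \<Sum>i\<in>I. a i * v i n) z = (\<Sum>k\<in>K. cnj (d k) * (\<Sum>i\<in>I. a i * v i k))"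
    unfolding z by (intro seq_inner_Q_comb[OF assms(1) _ assms(1)] in_Q_span_sum assms(3,4))
  also have "\<dots> = (\<Sum>i\<in>I. a i * (\<Sum>k\<in>K. cnj (d k) * v i k))"
    by (simp add: sum_distrib_left sum.swap[of _ K] mult.left_commute)
  also have "\<dots> = (\<Sum>i\<in>I. a i * seq_inner (v i) z)"
    unfolding z using assms(4) by (simp add: seq_inner_Q_comb[OF assms(1) _ assms(1)])
  finally show ?thesis .
qed

lemma seq_inner_diff_left:
  assumes "finite K" "in_Q_span K z" "in_Q_span K v" "in_Q_span K w"
  shows "seq_inner (\<lambda>n. v n - w n) z = seq_inner v z - seq_inner w z"
proof -
  obtain d where z: "z = Q_comb K d" using assms(2) unfolding in_Q_span_def by blast
  show ?thesis
    unfolding z using assms(1,3,4) in_Q_span_diff[OF assms(3,4)]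
    by (simp add: seq_inner_Q_comb sum_subtractf algebra_simps)
qed

lemma seq_inner_mult_left:
  assumes "finite K" "in_Q_span K z" "in_Q_span K v"
  shows "seq_inner (\<lambda>n. a * v n) z = a * seq_inner v z"
proof -
  obtain d where z: "z = Q_comb K d" using assms(2) unfolding in_Q_span_def by blast
  show ?thesis
    unfolding z using assms(1,3) in_Q_span_mult[OF assms(3)]
    by (simp add: seq_inner_Q_comb sum_distrib_left algebra_simps)
qed

lemma Q_comb_apply:
  assumes "finite J"
  shows "Q_comb J c n = (if n \<in> J then c n else 0) - (\<Sum>j\<in>J. c j * cinner (g j) (g n))"
proof -
  have "Q_comb J c n = (\<Sum>j\<in>J. (if j = n then c j else 0) - c j * cinner (g j) (g n))"
    unfolding Q_comb_def Q_def by (rule sum.cong) (auto simp: algebra_simps)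
  also have "\<dots> = (if n \<in> J then c n else 0) - (\<Sum>j\<in>J. c j * cinner (g j) (g n))"
    using assms by (simp add: sum_subtractf sum.delta')
  finally show ?thesis .
qed

text \<open>The coefficients \<open>\<langle>y, g j\<rangle>\<close> of a vector \<open>y\<close> orthogonal to all \<open>g n\<close>, \<open>n \<notin> J\<close>, form a
  relation among the rows \<open>Q j\<close>, \<open>j \<in> J\<close>; conversely a relation \<open>c\<close> yields such a vector
  \<open>\<Sum>j\<in>J. c j *\<^sub>C g j\<close>.\<close>

lemma deficient_iff_not_Q_independent:
  assumes fin: "finite J"
  shows "deficient J \<longleftrightarrow> \<not> Q_independent J"
proof
  assume "deficient J"
  then obtain y where y0: "y \<noteq> 0" and yo: "\<And>n. n \<notin> J \<Longrightarrow> cinner y (g n) = 0"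
    unfolding deficient_def by blast
  define c where "c j = cinner y (g j)" for j
  have tail0: "(\<lambda>m. if m \<notin> J then cinner y (g m) * cinner (g m) z else 0) = (\<lambda>m. 0)" for z
    using yo by auto
  have "Q_comb J c = (\<lambda>n. 0)"
  proof
    fix n
    have "cinner y (g n) = (\<Sum>j\<in>J. c j * cinner (g j) (g n))"
      using cinner_expansion_split[OF fin, of y "g n"] unfolding tail0 c_def by simp
    then show "Q_comb J c n = 0" unfolding Q_comb_apply[OF fin] using yo by (auto simp: c_def)
  qed
  moreover have "\<exists>j\<in>J. c j \<noteq> 0"
  proof (rule ccontr)
    assume "\<not> (\<exists>j\<in>J. c j \<noteq> 0)"
    then have "(norm y)\<^sup>2 = 0"
      using sum_cmod_cinner_sq_add_energy_outside[OF fin, of y] yo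
      by (simp add: c_def energy_outside_def if_distrib cong: if_cong)
    with y0 show False by simp
  qed
  ultimately show "\<not> Q_independent J" unfolding Q_independent_def by blast
next
  assume "\<not> Q_independent J"
  then obtain c j0 where z: "Q_comb J c = (\<lambda>n. 0)" and j0: "j0 \<in> J" "c j0 \<noteq> 0"
    unfolding Q_independent_def by blast
  define y where "y = (\<Sum>j\<in>J. c j *\<^sub>C g j)"
  have yg: "cinner y (g n) = (if n \<in> J then c n else 0)" for n
    using fun_cong[OF z, of n] unfolding Q_comb_apply[OF fin]
    by (simp add: y_def cinner_sum_left cinner_scaleC_left)
  then have "y \<noteq> 0" using j0 by (metis cinner_zero_left)
  then show "deficient J" unfolding deficient_def using yg by auto
qed

lemma Q_independent_subset:
  assumes "Q_independent K'" "K \<subseteq> K'" "finite K'"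
  shows "Q_independent K"
  unfolding Q_independent_def
proof (intro allI impI ballI)
  fix c j assume "Q_comb K c = (\<lambda>n. 0)" "j \<in> K"
  then have "Q_comb K' (\<lambda>j. if j \<in> K then c j else 0) = (\<lambda>n. 0)"
    using Q_comb_extend[OF assms(2,3)] by simp
  then show "c j = 0"
    using assms(1) \<open>j \<in> K\<close> assms(2) unfolding Q_independent_def by fastforce
qed

lemma not_in_Q_span_if_Q_independent:
  assumes "Q_independent (insert l K)" "l \<notin> K" "finite K"
  shows "\<not> in_Q_span K (Q l)"
proof
  assume "in_Q_span K (Q l)"
  then obtain c where c: "Q l = Q_comb K c" unfolding in_Q_span_def by blast
  have "Q_comb (insert l K) (c(l := -1)) n = 0" for n
  proof -
    have "Q_comb (insert l K) (c(l := -1)) n = - Q l n + (\<Sum>j\<in>K. (c(l := -1)) j * Q j n)"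
      unfolding Q_comb_def using assms(2,3) by simp
    also have "(\<Sum>j\<in>K. (c(l := -1)) j * Q j n) = Q_comb K c n"
      unfolding Q_comb_def using assms(2) by (intro sum.cong) auto
    also have "- Q l n + Q_comb K c n = 0" using c by simp
    finally show ?thesis .
  qed
  then have "(c(l := -1)) l = 0"
    using assms(1) unfolding Q_independent_def by blast
  then show False by simp
qed

lemma Q_independent_insert:
  assumes "Q_independent K" "finite K" "\<not> in_Q_span K (Q l)"
  shows "Q_independent (insert l K)"
  unfolding Q_independent_def
proof (intro allI impI ballI)
  fix c j assume z: "Q_comb (insert l K) c = (\<lambda>n. 0)" and j: "j \<in> insert l K"
  have lK: "l \<notin> K" using assms(2,3) in_Q_span_Q by blast
  have split: "Q_comb (insert l K) c n = c l * Q l n + Q_comb K c n" for n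
    unfolding Q_comb_def by (rule sum.insert[OF assms(2) lK])
  have cl: "c l = 0"
  proof (rule ccontr)
    assume cl: "c l \<noteq> 0"
    have "Q l = (\<lambda>n. (- 1 / c l) * Q_comb K c n)"
    proof
      fix n
      have "c l * Q l n + Q_comb K c n = 0" using z split[of n] by (simp add: fun_eq_iff)
      then show "Q l n = (- 1 / c l) * Q_comb K c n" using cl by (simp add: field_simps add_eq_0_iff)
    qed
    moreover have "in_Q_span K (\<lambda>n. (- 1 / c l) * Q_comb K c n)"
      by (rule in_Q_span_mult) (auto simp: in_Q_span_def)
    ultimately show False using assms(3) by simp
  qed
  then have "Q_comb K c = (\<lambda>n. 0)" using z split by (simp add: fun_eq_iff)
  then show "c j = 0" using assms(1) j cl unfolding Q_independent_def by auto
qed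

lemma orthonormal_family_mono:
  assumes "orthonormal_family K r u" "K \<subseteq> K'" "finite K'"
  shows "orthonormal_family K' r u"
  using assms in_Q_span_mono unfolding orthonormal_family_def by blast

lemma orthonormal_family_extend:
  assumes fin: "finite K" and u: "orthonormal_family K r u" and w: "in_Q_span K w"
    and unit: "seq_inner w w = 1" and orth: "\<And>i. i < r \<Longrightarrow> seq_inner w (u i) = 0"
  shows "orthonormal_family K (Suc r) (u(r := w))"
proof -
  have u_in: "\<And>i. i < r \<Longrightarrow> in_Q_span K (u i)"
    and u_on: "\<And>i i'. i < r \<Longrightarrow> i' < r \<Longrightarrow> seq_inner (u i) (u i') = (if i = i' then 1 else 0)"
    using u unfolding orthonormal_family_def by auto
  have "seq_inner (u i) w = 0" if "i < r" for i
    using seq_inner_commute[OF fin w u_in[OF that]] orth[OF that] by simp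
  then show ?thesis
    unfolding orthonormal_family_def using u_in u_on w unit orth
    by (auto simp: less_Suc_eq)
qed

lemma seq_inner_family_expansion:
  assumes fin: "finite K" and u: "orthonormal_family K r u" and "i0 < r"
  shows "seq_inner (\<lambda>n. \<Sum>i<r. \<beta> i * u i n) (u i0) = \<beta> i0"
proof -
  have u_in: "\<And>i. i < r \<Longrightarrow> in_Q_span K (u i)"
    and u_on: "\<And>i i'. i < r \<Longrightarrow> i' < r \<Longrightarrow> seq_inner (u i) (u i') = (if i = i' then 1 else 0)"
    using u unfolding orthonormal_family_def by auto
  have "seq_inner (\<lambda>n. \<Sum>i<r. \<beta> i * u i n) (u i0) = (\<Sum>i<r. \<beta> i * seq_inner (u i) (u i0))"
    by (rule seq_inner_sum_left[OF fin u_in[OF assms(3)]]) (auto intro: u_in)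
  also have "\<dots> = (\<Sum>i<r. if i = i0 then \<beta> i else 0)"
    using assms(3) u_on by (intro sum.cong) auto
  finally show ?thesis using assms(3) by simp
qed

lemma normalize_in_Q_span:
  assumes fin: "finite K" and w_in: "in_Q_span K w" and w_ne: "w \<noteq> (\<lambda>n. 0)"
  shows "\<exists>c. c \<noteq> 0 \<and> seq_inner (\<lambda>n. c * w n) (\<lambda>n. c * w n) = 1"
proof -
  obtain n0 where n0: "w n0 \<noteq> 0" using w_ne by auto
  define s where "s = Re (seq_inner w w)"
  have s_sums: "(\<lambda>n. (cmod (w n))\<^sup>2) sums s"
    unfolding s_def using sums_Re[OF sums_seq_inner_self[OF fin w_in]] by simp
  have ww: "seq_inner w w = of_real s"
    using sums_Im[OF sums_seq_inner_self[OF fin w_in]] sums_unique[of "\<lambda>_. 0"]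
    by (simp add: s_def complex_eq_iff)
  have "(cmod (w n0))\<^sup>2 \<le> s"
    using sum_le_suminf[OF sums_summable[OF s_sums], of "{n0}"] sums_unique[OF s_sums] by simp
  then have s_pos: "0 < s" using n0 by (smt (verit) zero_less_norm_iff zero_less_power)
  define c where "c = complex_of_real (1 / sqrt s)"
  have cw_in: "in_Q_span K (\<lambda>n. c * w n)" by (rule in_Q_span_mult[OF w_in])
  have "seq_inner (\<lambda>n. c * w n) (\<lambda>n. c * w n) = c * seq_inner w (\<lambda>n. c * w n)"
    by (rule seq_inner_mult_left[OF fin cw_in w_in])
  moreover have "seq_inner w (\<lambda>n. c * w n) = cnj (seq_inner (\<lambda>n. c * w n) w)"
    by (rule seq_inner_commute[OF fin cw_in w_in])
  moreover have "seq_inner (\<lambda>n. c * w n) w = c * seq_inner w w"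
    by (rule seq_inner_mult_left[OF fin w_in w_in])
  ultimately have "seq_inner (\<lambda>n. c * w n) (\<lambda>n. c * w n) = of_real (1 / sqrt s * (1 / sqrt s * s))"
    unfolding ww c_def complex_cnj_mult complex_cnj_complex_of_real of_real_mult by simp
  also have "1 / sqrt s * (1 / sqrt s * s) = 1"
    using s_pos real_sqrt_mult_self[of s] by (simp add: field_simps)
  finally show ?thesis using s_pos by (intro exI[of _ c]) (simp add: c_def)
qed

lemma gram_schmidt_step:
  assumes fin: "finite K" and u: "orthonormal_family K r u" and v: "in_Q_span K v"
    and new: "\<not> in_family_span r u v"
  shows "\<exists>w. in_Q_span K w \<and> seq_inner w w = 1 \<and> (\<forall>i<r. seq_inner w (u i) = 0) \<and>
    in_family_span (Suc r) (u(r := w)) v"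
proof -
  have u_in: "\<And>i. i < r \<Longrightarrow> in_Q_span K (u i)"
    using u unfolding orthonormal_family_def by auto
  define \<rho> where "\<rho> i = seq_inner v (u i)" for i
  define p where "p n = (\<Sum>i<r. \<rho> i * u i n)" for n
  define w where "w n = v n - p n" for n
  have p_in: "in_Q_span K p" unfolding p_def[abs_def] by (intro in_Q_span_sum u_in) auto
  have w_in: "in_Q_span K w" unfolding w_def[abs_def] by (intro in_Q_span_diff v p_in)
  have w_orth: "seq_inner w (u i) = 0" if "i < r" for i
  proof -
    have "seq_inner w (u i) = seq_inner v (u i) - seq_inner p (u i)"
      unfolding w_def[abs_def] by (rule seq_inner_diff_left[OF fin u_in[OF that] v p_in])
    also have "seq_inner p (u i) = \<rho> i"
      unfolding p_def[abs_def] by (rule seq_inner_family_expansion[OF fin u that])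
    finally show ?thesis by (simp add: \<rho>_def)
  qed
  have "w \<noteq> (\<lambda>n. 0)"
    using new unfolding in_family_span_def w_def p_def by (metis (lifting) eq_iff_diff_eq_0 ext)
  then obtain c where c: "c \<noteq> 0" "seq_inner (\<lambda>n. c * w n) (\<lambda>n. c * w n) = 1"
    using normalize_in_Q_span[OF fin w_in] by blast
  have "seq_inner (\<lambda>n. c * w n) (u i) = 0" if "i < r" for i
    using seq_inner_mult_left[OF fin u_in[OF that] w_in] w_orth[OF that] by simp
  moreover have "v = (\<lambda>n. (\<Sum>i<r. \<rho> i * u i n) + 1 / c * (c * w n))"
    using c(1) by (simp add: w_def p_def)
  then have "in_family_span (Suc r) (u(r := \<lambda>n. c * w n)) v"
    by (metis in_family_span_fun_upd)
  ultimately show ?thesis using in_Q_span_mult[OF w_in] c(2) by blast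
qed

lemma gram_schmidt:
  assumes "finite K" "Q_independent K"
  shows "\<exists>u. orthonormal_family K (card K) u \<and> (\<forall>j\<in>K. in_family_span (card K) u (Q j))"
  using assms
proof (induction K rule: finite_induct)
  case empty
  then show ?case by (simp add: orthonormal_family_def)
next
  case (insert l K)
  define r where "r = card K"
  have fin': "finite (insert l K)" using insert by simp
  obtain u where u: "orthonormal_family K r u" and span: "\<And>j. j \<in> K \<Longrightarrow> in_family_span r u (Q j)"
    using insert Q_independent_subset[OF insert.prems, of K] unfolding r_def by auto
  have u': "orthonormal_family (insert l K) r u"
    using orthonormal_family_mono[OF u _ fin'] by blast
  have "\<not> in_family_span r u (Q l)"
  proof
    assume "in_family_span r u (Q l)"
    then obtain \<beta> where "Q l = (\<lambda>n. \<Sum>i<r. \<beta> i * u i n)"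
      unfolding in_family_span_def by blast
    moreover have "in_Q_span K (\<lambda>n. \<Sum>i<r. \<beta> i * u i n)"
      by (rule in_Q_span_sum) (use u in \<open>auto simp: orthonormal_family_def\<close>)
    ultimately have "in_Q_span K (Q l)" by simp
    then show False using not_in_Q_span_if_Q_independent insert by blast
  qed
  then obtain w where w: "in_Q_span (insert l K) w" "seq_inner w w = 1"
      "\<forall>i<r. seq_inner w (u i) = 0" "in_family_span (Suc r) (u(r := w)) (Q l)"
    using gram_schmidt_step[OF fin' u' in_Q_span_Q[OF _ fin']] by blast
  have "in_family_span (Suc r) (u(r := w)) (Q j)" if j: "j \<in> K" for j
  proof -
    obtain \<beta> where "Q j = (\<lambda>n. \<Sum>i<r. \<beta> i * u i n)"
      using span[OF j] unfolding in_family_span_def by blast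
    then have "Q j = (\<lambda>n. (\<Sum>i<r. \<beta> i * u i n) + 0 * w n)" by simp
    then show ?thesis by (metis in_family_span_fun_upd)
  qed
  moreover have "orthonormal_family (insert l K) (Suc r) (u(r := w))"
    using orthonormal_family_extend[OF fin' u'] w by blast
  moreover have "card (insert l K) = Suc r" using insert by (simp add: r_def)
  ultimately show ?case using w(4) by (metis insert_iff)
qed

lemma in_family_span_if_in_Q_span:
  assumes span: "\<And>j. j \<in> K \<Longrightarrow> in_family_span r u (Q j)" and "in_Q_span K v"
  shows "in_family_span r u v"
proof -
  obtain c where c: "v = Q_comb K c" using assms(2) unfolding in_Q_span_def by blast
  obtain B where B: "\<And>j. j \<in> K \<Longrightarrow> Q j = (\<lambda>n. \<Sum>i<r. B j i * u i n)"
    using span unfolding in_family_span_def by metis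
  have "v n = (\<Sum>i<r. (\<Sum>j\<in>K. c j * B j i) * u i n)" for n
  proof -
    have "v n = (\<Sum>j\<in>K. \<Sum>i<r. c j * (B j i * u i n))"
      using B by (auto simp: c Q_comb_def sum_distrib_left intro!: sum.cong)
    also have "\<dots> = (\<Sum>i<r. \<Sum>j\<in>K. c j * (B j i * u i n))" by (rule sum.swap)
    finally show ?thesis by (simp add: sum_distrib_right mult.assoc)
  qed
  then have "v = (\<lambda>n. \<Sum>i<r. (\<Sum>j\<in>K. c j * B j i) * u i n)" ..
  then show ?thesis unfolding in_family_span_def by (rule exI[of _ "\<lambda>i. \<Sum>j\<in>K. c j * B j i"])
qed

text \<open>The trace of the projection \<open>Q\<close> equals its rank.\<close>

lemma sums_one_minus_norm_sq:
  assumes fin: "finite K" and ind: "Q_independent K" and span: "\<And>l. in_Q_span K (Q l)"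
  shows "(\<lambda>l. 1 - (norm (g l))\<^sup>2) sums real (card K)"
proof -
  define r where "r = card K"
  obtain u where u: "orthonormal_family K r u" and u_span: "\<And>j. j \<in> K \<Longrightarrow> in_family_span r u (Q j)"
    using gram_schmidt[OF fin ind] unfolding r_def by blast
  have u_in: "\<And>i. i < r \<Longrightarrow> in_Q_span K (u i)"
    and u_unit: "\<And>i. i < r \<Longrightarrow> seq_inner (u i) (u i) = 1"
    using u unfolding orthonormal_family_def by auto
  have diag: "1 - (norm (g l))\<^sup>2 = (\<Sum>i<r. (cmod (u i l))\<^sup>2)" for l
  proof -
    obtain \<beta> where \<beta>: "Q l = (\<lambda>n. \<Sum>i<r. \<beta> i * u i n)"
      using in_family_span_if_in_Q_span[OF u_span span] unfolding in_family_span_def by blast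
    have "\<beta> i = cnj (u i l)" if "i < r" for i
    proof -
      have "\<beta> i = seq_inner (Q l) (u i)"
        unfolding \<beta> using seq_inner_family_expansion[OF fin u that] by simp
      also have "\<dots> = cnj (seq_inner (u i) (Q l))"
        by (rule seq_inner_commute[OF fin u_in[OF that] span])
      finally show ?thesis using seq_inner_Q_right[OF fin u_in[OF that]] by simp
    qed
    then have "Q l l = (\<Sum>i<r. u i l * cnj (u i l))"
      using fun_cong[OF \<beta>, of l] by (simp add: mult.commute)
    also have "\<dots> = of_real (\<Sum>i<r. (cmod (u i l))\<^sup>2)"
      by (simp only: of_real_sum complex_norm_square)
    finally show ?thesis using Q_diag[of l] by (metis of_real_eq_iff)
  qed
  have "(\<lambda>l. (cmod (u i l))\<^sup>2) sums 1" if "i < r" for i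
    using sums_Re[OF sums_seq_inner_self[OF fin u_in[OF that]]] u_unit[OF that] by simp
  then have "(\<lambda>l. \<Sum>i<r. (cmod (u i l))\<^sup>2) sums (\<Sum>i<r. 1)"
    by (intro sums_sum) simp
  then show ?thesis unfolding diag[symmetric] by (simp add: r_def)
qed

lemma frame_on_prepend_iff_Q_independent:
  assumes "g = prepend k x f" "finite J"
  shows "frame_on f (UNIV - J) \<longleftrightarrow> Q_independent (prepend_indices k J)"
  using frame_on_prepend_iff[of f J k x] frame_on_iff_not_deficient
    deficient_iff_not_Q_independent finite_prepend_indices[OF assms(2)] assms(1)
  by blast

text \<open>A row \<open>Q l\<close> outside the span would make \<open>insert (l - k) J\<close> removable.\<close>

lemma maximal_removable_spans:
  assumes g: "g = prepend k x f" and fin: "finite J" and J: "frame_on f (UNIV - J)"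
    and max: "\<And>J'. finite J' \<Longrightarrow> frame_on f (UNIV - J') \<Longrightarrow> card J' \<le> card J"
  shows "in_Q_span (prepend_indices k J) (Q l)"
proof (rule ccontr)
  assume l: "\<not> in_Q_span (prepend_indices k J) (Q l)"
  have ind: "Q_independent (prepend_indices k J)"
    using frame_on_prepend_iff_Q_independent[OF g fin] J by blast
  have "l \<notin> prepend_indices k J"
    using l in_Q_span_Q finite_prepend_indices[OF fin] by blast
  then obtain m where m: "l = m + k" "m \<notin> J" using not_in_prepend_indices by blast
  have "Q_independent (prepend_indices k (insert m J))"
    using Q_independent_insert[OF ind finite_prepend_indices[OF fin] l]
    unfolding m insert_prepend_indices .
  then have "frame_on f (UNIV - insert m J)"
    using frame_on_prepend_iff_Q_independent[OF g] fin by blast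
  then show False using max[of "insert m J"] fin m(2) by simp
qed

end

theorem corollary3p7:
  fixes f :: "nat \<Rightarrow> 'a::{complex_inner, complete_space}"
    and x :: "nat \<Rightarrow> 'a" and k :: nat
  assumes "separable_space TYPE('a)"
    and "infinite_dimensional TYPE('a)"
    and "frame f"
    and "optimal_upper_frame_bound f = 1"
    and "excess f < \<infinity>"
    and "finite_dim_set (range (\<lambda>y. y - frame_op f y))"
    and "parseval_frame (prepend k x f)"
  shows "summable (\<lambda>n. 1 - (norm (f n))\<^sup>2) \<and>
         (\<Sum>n<k. (norm (x n))\<^sup>2) = (\<Sum>n. 1 - (norm (f n))\<^sup>2) - real (the_enat (excess f))"
proof -
  define g where "g = prepend k x f"
  interpret parseval g using assms(7) by unfold_locales (simp add: g_def)
  obtain e where e: "excess f = enat e" using assms(5) by (cases "excess f") auto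
  obtain J where J: "finite J" "frame_on f (UNIV - J)" "card J = e"
    using excess_attained[OF assms(3) e] by blast
  have max: "card J' \<le> card J" if "finite J'" "frame_on f (UNIV - J')" for J'
    using card_le_excess[OF that] e J(3) by simp
  have "(\<lambda>l. 1 - (norm (g l))\<^sup>2) sums real (e + k)"
    using sums_one_minus_norm_sq[OF finite_prepend_indices[OF J(1)]
        frame_on_prepend_iff_Q_independent[OF g_def J(1), THEN iffD1, OF J(2)]
        maximal_removable_spans[OF g_def J(1,2) max]]
    by (simp add: card_prepend_indices J)
  then have "(\<lambda>n. 1 - (norm (g (n + k)))\<^sup>2) sums (real (e + k) - (\<Sum>n<k. 1 - (norm (g n))\<^sup>2))"
    by (rule sums_split_initial_segment)
  moreover have "(\<Sum>n<k. 1 - (norm (g n))\<^sup>2) = (\<Sum>n<k. 1 - (norm (x n))\<^sup>2)"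
    by (simp add: g_def prepend_def)
  ultimately have "(\<lambda>n. 1 - (norm (f n))\<^sup>2) sums (real (e + k) - (\<Sum>n<k. 1 - (norm (x n))\<^sup>2))"
    by (simp add: g_def prepend_def)
  then show ?thesis using e by (auto simp: sums_iff sum_subtractf)
qed

end
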